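(* For $k\geqslant 0$ let $B_k$ be the number of equivalence classes, with respect to the relation $\cong$, of ultrametric spaces $(X,d)\in\mathfrak U$ with $|X|=k+1$. Then for every $k\geqslant1$ $$B_k=\begin{cases}\dfrac{B_i(B_i+1)}{2}+\sum\limits_{j=0}^{i-1}B_{k-j-1}B_j, & \text{if } k=2i+1,\\[2mm] \sum\limits_{j=0}^{i-1}B_{k-j-1}B_j, & \text{if } k=2i,\end{cases}$$ and $B_1=B_2=1$, $B_3=2$.
   Context: $\operatorname{Sp}(X)=\{d(x,y):x\neq y\}$; $\mathfrak U$ is the class of finite ultrametric spaces $X$ with $|\operatorname{Sp}(X)|=|X|-1$. For a finite ultrametric space $X$ (assumed, up to isometry, to satisfy $X\cap\operatorname{Sp}(X)=\varnothing$), the representing tree $T_X$ is the labelled rooted tree defined recursively: for $X=\{x\}$ it is a single node labelled $x$; for $|X|\ge2$ the root is labelled $\operatorname{diam}X$ and has one child for each class $X_i$ of the equivalence relation $x\sim y\iff d(x,y)<\operatorname{diam}X$, that child being labelled $x$ if $X_i=\{x\}$ and otherwise labelled $\operatorname{diam}X_i$ and carrying the recursively constructed tree for $X_i$. $\overline{T}_X$ is $T_X$ with labels erased. For finite ultrametric spaces $X,Y$, $X\cong Y$ means that the rooted trees $\overline{T}_X$ and $\overline{T}_Y$ are isomorphic. *)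

theory Defs
  imports Complex_Main
begin

text \<open>A finite metric space is given by a carrier set X and a distance d
  (only its values on X matter).\<close>

definition ultrametric :: "'a set \<Rightarrow> ('a \<Rightarrow> 'a \<Rightarrow> real) \<Rightarrow> bool" where
  "ultrametric X d \<longleftrightarrow>
     (\<forall>x\<in>X. \<forall>y\<in>X. d x y \<ge> 0 \<and> (d x y = 0 \<longleftrightarrow> x = y) \<and> d x y = d y x) \<and>
     (\<forall>x\<in>X. \<forall>y\<in>X. \<forall>z\<in>X. d x y \<le> max (d x z) (d z y))"

definition Sp :: "'a set \<Rightarrow> ('a \<Rightarrow> 'a \<Rightarrow> real) \<Rightarrow> real set" where
  "Sp X d = {d x y | x y. x \<in> X \<and> y \<in> X \<and> x \<noteq> y}"

definition diam :: "'a set \<Rightarrow> ('a \<Rightarrow> 'a \<Rightarrow> real) \<Rightarrow> real" where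
  "diam X d = Max {d x y | x y. x \<in> X \<and> y \<in> X}"

definition in_U :: "'a set \<Rightarrow> ('a \<Rightarrow> 'a \<Rightarrow> real) \<Rightarrow> bool" where
  "in_U X d \<longleftrightarrow> finite X \<and> X \<noteq> {} \<and> ultrametric X d \<and> card (Sp X d) = card X - 1"

text \<open>A node of the tree T_X is
  identified with the set of points (leaves) below it: the root is X, a node A
  with at least two points has as children the classes of the relation
  d x y < diam A, and a singleton is a leaf.\<close>
definition tchildren :: "('a \<Rightarrow> 'a \<Rightarrow> real) \<Rightarrow> 'a set \<Rightarrow> 'a set set" where
  "tchildren d A = (if card A \<ge> 2 then {{y \<in> A. d x y < diam A d} | x. x \<in> A} else {})"

inductive_set tnodes :: "'a set \<Rightarrow> ('a \<Rightarrow> 'a \<Rightarrow> real) \<Rightarrow> 'a set set"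
  for X :: "'a set" and d :: "'a \<Rightarrow> 'a \<Rightarrow> real" where
  root: "X \<in> tnodes X d"
| child: "A \<in> tnodes X d \<Longrightarrow> B \<in> tchildren d A \<Longrightarrow> B \<in> tnodes X d"

definition tree_iso :: "'a set \<Rightarrow> ('a \<Rightarrow> 'a \<Rightarrow> real) \<Rightarrow> 'b set \<Rightarrow> ('b \<Rightarrow> 'b \<Rightarrow> real) \<Rightarrow> bool" where
  "tree_iso X d Y e \<longleftrightarrow>
     (\<exists>f. bij_betw f (tnodes X d) (tnodes Y e) \<and> f X = Y \<and>
        (\<forall>A\<in>tnodes X d. \<forall>B\<in>tnodes X d. B \<in> tchildren d A \<longleftrightarrow> f B \<in> tchildren e (f A)))"

text \<open>Spaces of U with k+1 points (carriers taken inside nat; every finite space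
  is isometric to one of these).\<close>
definition U_spaces :: "nat \<Rightarrow> (nat set \<times> (nat \<Rightarrow> nat \<Rightarrow> real)) set" where
  "U_spaces k = {(X, d). in_U X d \<and> card X = k + 1}"

definition B :: "nat \<Rightarrow> nat" where
  "B k = card (U_spaces k //
     {(p, q). p \<in> U_spaces k \<and> q \<in> U_spaces k \<and> tree_iso (fst p) (snd p) (fst q) (snd q)})"

end

theory Submission
  imports Defs "HOL-Library.Multiset" "HOL-Library.Disjoint_Sets" "HOL-Combinatorics.Permutations"
begin

text \<open>
  The unlabelled representing tree of a finite ultrametric space is captured by its shape, the
  nested multiset of the shapes of its balls, and two spaces are isomorphic in the sense of
  tree_iso exactly when their shapes agree.  For X in U the count of distance values along the
  tree, card (Sp X) \<le> card X - 1 with equality only if every inner node has exactly two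
  children whose subspaces are again in U, shows that the tree is binary; conversely, every
  binary tree is realised by relabelling two realisations of its subtrees apart, squashing
  their distances into disjoint ranges below 2 and putting distance 2 between them.  Hence
  B k counts unordered binary trees with k + 1 leaves, and splitting such a tree at the root
  into an unordered pair of subtrees with p and k + 1 - p leaves gives the recurrence.
\<close>

lemma size_2_iff: "size M = 2 \<longleftrightarrow> (\<exists>a b. M = {#a, b#})"
proof
  assume "size M = 2"
  then obtain a N where "M = N + {#a#}" "size N = 1"
    using size_eq_Suc_imp_eq_union[of M 1] by auto
  then show "\<exists>a b. M = {#a, b#}" using size_1_singleton_mset by fastforce
qed auto

lemma bij_betw_image_eq_iff:
  assumes "bij_betw f S T" "P \<subseteq> S" "Q \<subseteq> T"
  shows "Q = f ` P \<longleftrightarrow> (\<forall>x\<in>S. x \<in> P \<longleftrightarrow> f x \<in> Q)"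
proof
  assume "Q = f ` P"
  then show "\<forall>x\<in>S. x \<in> P \<longleftrightarrow> f x \<in> Q"
    using inj_on_image_mem_iff[OF bij_betw_imp_inj_on[OF assms(1)] _ assms(2)] by blast
next
  assume iff: "\<forall>x\<in>S. x \<in> P \<longleftrightarrow> f x \<in> Q"
  show "Q = f ` P"
  proof (intro equalityI subsetI)
    fix q assume "q \<in> Q"
    moreover obtain x where "x \<in> S" "q = f x"
      using \<open>q \<in> Q\<close> assms(1,3) by (auto simp: bij_betw_def)
    ultimately show "q \<in> f ` P" using iff by blast
  next
    fix q assume "q \<in> f ` P"
    then show "q \<in> Q" using iff assms(2) by blast
  qed
qed

lemma image_mset_eq_imp_bij_betw:
  assumes "finite A" "finite T" "image_mset f (mset_set A) = image_mset g (mset_set T)"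
  obtains h where "bij_betw h A T" "\<And>a. a \<in> A \<Longrightarrow> g (h a) = f a"
proof -
  have "card A = card T" using arg_cong[OF assms(3), of size] assms(1,2) by simp
  then obtain k where k: "bij_betw k A T" using assms(1,2) finite_same_card_bij by blast
  then have "mset_set T = image_mset k (mset_set A)"
    by (simp add: bij_betw_def image_mset_mset_set)
  then have "image_mset f (mset_set A) = image_mset (g \<circ> k) (mset_set A)"
    using assms(3) by (simp add: multiset.map_comp)
  then obtain p where p: "p permutes A" "\<forall>a\<in>A. f a = (g \<circ> k) (p a)"
    by (rule image_mset_eq_implies_permutes[OF assms(1)])
  have "bij_betw (k \<circ> p) A T" using bij_betw_trans[OF permutes_imp_bij[OF p(1)] k] .
  then show ?thesis using that p(2) by simp
qed

lemma card_quotient_eq_card_image: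
  assumes "\<And>p q. p \<in> S \<Longrightarrow> q \<in> S \<Longrightarrow> R p q \<longleftrightarrow> F p = F q"
  shows "card (S // {(p, q). p \<in> S \<and> q \<in> S \<and> R p q}) = card (F ` S)"
proof -
  have "{(p, q). p \<in> S \<and> q \<in> S \<and> R p q} `` {x} = {q \<in> S. F q = F x}" if "x \<in> S" for x
    using assms that by auto
  then have "S // {(p, q). p \<in> S \<and> q \<in> S \<and> R p q} = (\<lambda>v. {q \<in> S. F q = v}) ` F ` S"
    unfolding quotient_def image_image by auto
  moreover have "inj_on (\<lambda>v. {q \<in> S. F q = v}) (F ` S)"
    by (rule inj_onI) blast
  ultimately show ?thesis by (simp add: card_image)
qed

section \<open>Diameter and the children of a node\<close>

lemma finite_distances: "finite A \<Longrightarrow> finite {d x y | x y. x \<in> A \<and> y \<in> A}"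
proof -
  have "{d x y | x y. x \<in> A \<and> y \<in> A} = case_prod d ` (A \<times> A)" by auto
  then show "finite A \<Longrightarrow> ?thesis" by simp
qed

lemma dist_le_diam: "finite A \<Longrightarrow> x \<in> A \<Longrightarrow> y \<in> A \<Longrightarrow> d x y \<le> diam A d"
  unfolding diam_def by (rule Max_ge) (auto simp: finite_distances)

lemma diam_attained:
  assumes "finite A" "A \<noteq> {}"
  obtains a b where "a \<in> A" "b \<in> A" "diam A d = d a b"
proof -
  have "diam A d \<in> {d x y | x y. x \<in> A \<and> y \<in> A}"
    unfolding diam_def using assms by (intro Max_in) (auto simp: finite_distances)
  then show ?thesis using that by blast
qed

lemma ultrametric_subset: "ultrametric X d \<Longrightarrow> A \<subseteq> X \<Longrightarrow> ultrametric A d"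
  unfolding ultrametric_def by (meson subsetD)

context
  fixes X d assumes um: "ultrametric X d"
begin

lemma ultrametric_nonneg: "x \<in> X \<Longrightarrow> y \<in> X \<Longrightarrow> 0 \<le> d x y"
  using um unfolding ultrametric_def by blast

lemma ultrametric_eq_0_iff: "x \<in> X \<Longrightarrow> y \<in> X \<Longrightarrow> d x y = 0 \<longleftrightarrow> x = y"
  using um unfolding ultrametric_def by blast

lemma ultrametric_pos: "x \<in> X \<Longrightarrow> y \<in> X \<Longrightarrow> x \<noteq> y \<Longrightarrow> 0 < d x y"
  using ultrametric_nonneg ultrametric_eq_0_iff by (simp add: less_le)

lemma ultrametric_sym: "x \<in> X \<Longrightarrow> y \<in> X \<Longrightarrow> d x y = d y x"
  using um unfolding ultrametric_def by blast

lemma ultrametric_triangle: "x \<in> X \<Longrightarrow> y \<in> X \<Longrightarrow> z \<in> X \<Longrightarrow> d x y \<le> max (d x z) (d z y)"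
  using um unfolding ultrametric_def by blast

lemma ultrametric_less_trans:
  "x \<in> X \<Longrightarrow> y \<in> X \<Longrightarrow> z \<in> X \<Longrightarrow> d x z < r \<Longrightarrow> d z y < r \<Longrightarrow> d x y < r"
  using ultrametric_triangle[of x y z] by simp

lemma diam_pos:
  assumes "finite X" "2 \<le> card X"
  shows "0 < diam X d"
proof -
  have "\<not> card X \<le> Suc 0" using assms(2) by simp
  then obtain a b where ab: "a \<in> X" "b \<in> X" "a \<noteq> b"
    using card_le_Suc0_iff_eq[OF assms(1)] by blast
  then have "0 < d a b" by (rule ultrametric_pos)
  also have "d a b \<le> diam X d" using dist_le_diam[OF assms(1) ab(1,2)] .
  finally show ?thesis .
qed

lemma ex_dist_eq_diam:
  assumes "finite X" "x \<in> X"
  obtains y where "y \<in> X" "d x y = diam X d"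
proof -
  obtain a b where ab: "a \<in> X" "b \<in> X" "diam X d = d a b"
    using diam_attained[OF assms(1)] assms(2) by blast
  have "d a b \<le> max (d a x) (d x b)" using ultrametric_triangle[OF ab(1,2) assms(2)] .
  moreover have "d a x \<le> diam X d" "d x b \<le> diam X d"
    using dist_le_diam[OF assms(1)] ab(1,2) assms(2) by blast+
  ultimately have "d a x = diam X d \<or> d x b = diam X d"
    using ab(3) by (cases "d a x \<le> d x b") (simp_all add: max_def)
  then have "d x a = diam X d \<or> d x b = diam X d"
    using ultrametric_sym[OF ab(1) assms(2)] by auto
  then show ?thesis using that ab(1,2) by blast
qed

end

definition diam_class :: "('a \<Rightarrow> 'a \<Rightarrow> real) \<Rightarrow> 'a set \<Rightarrow> 'a \<Rightarrow> 'a set" where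
  "diam_class d A x = {y \<in> A. d x y < diam A d}"

lemma tchildren_eq_diam_class: "2 \<le> card A \<Longrightarrow> tchildren d A = diam_class d A ` A"
  unfolding tchildren_def diam_class_def by auto

lemma tchildren_small: "card A < 2 \<Longrightarrow> tchildren d A = {}"
  unfolding tchildren_def by auto

lemma tchildrenE:
  assumes "C \<in> tchildren d A"
  obtains x where "2 \<le> card A" "x \<in> A" "C = diam_class d A x"
  using assms that unfolding tchildren_def diam_class_def by (auto split: if_splits)

lemma tchildren_subset: "C \<in> tchildren d A \<Longrightarrow> C \<subseteq> A"
  unfolding tchildren_def by (auto split: if_splits)

lemma finite_tchildren: "finite A \<Longrightarrow> finite (tchildren d A)"
  by (cases "2 \<le> card A") (simp_all add: tchildren_eq_diam_class tchildren_small)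

context
  fixes A d assumes um: "ultrametric A d" and fin: "finite A"
begin

lemma self_in_diam_class: "2 \<le> card A \<Longrightarrow> x \<in> A \<Longrightarrow> x \<in> diam_class d A x"
  using diam_pos[OF um fin] ultrametric_eq_0_iff[OF um, of x x] unfolding diam_class_def by auto

lemma diam_class_psubset:
  assumes "x \<in> A"
  shows "diam_class d A x \<subset> A"
proof -
  obtain y where "y \<in> A" "d x y = diam A d" by (rule ex_dist_eq_diam[OF um fin assms])
  then have "y \<notin> diam_class d A x" unfolding diam_class_def by simp
  moreover have "diam_class d A x \<subseteq> A" unfolding diam_class_def by blast
  ultimately show ?thesis using \<open>y \<in> A\<close> by blast
qed

text \<open>The strong triangle inequality makes d x y < diam A d an equivalence relation.\<close>
lemma diam_class_eq:
  assumes "x \<in> A" "x' \<in> A" "z \<in> diam_class d A x" "z \<in> diam_class d A x'"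
  shows "diam_class d A x = diam_class d A x'"
proof -
  note lt_trans = ultrametric_less_trans[OF um] and sym = ultrametric_sym[OF um]
  have z: "z \<in> A" "d x z < diam A d" "d x' z < diam A d"
    using assms(3,4) unfolding diam_class_def by auto
  have zx': "d z x' < diam A d" using z sym[of x' z] assms(2) by simp
  have xx': "d x x' < diam A d"
    using lt_trans[of x x' z] assms(1,2) z(1,2) zx' by blast
  then have x'x: "d x' x < diam A d" using sym[of x x'] assms(1,2) by simp
  have "d x y < diam A d \<longleftrightarrow> d x' y < diam A d" if "y \<in> A" for y
    using lt_trans[of x y x'] lt_trans[of x' y x] xx' x'x assms(1,2) that by blast
  then show ?thesis unfolding diam_class_def by auto
qed

lemma tchildren_disjoint:
  assumes "C \<in> tchildren d A" "C' \<in> tchildren d A" "C \<noteq> C'"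
  shows "C \<inter> C' = {}"
proof -
  obtain x x' where "x \<in> A" "x' \<in> A" "C = diam_class d A x" "C' = diam_class d A x'"
    using assms(1,2) by (metis tchildrenE)
  then show ?thesis using diam_class_eq assms(3) by blast
qed

lemma tchildren_psubset: "C \<in> tchildren d A \<Longrightarrow> C \<subset> A"
  by (elim tchildrenE) (simp add: diam_class_psubset)

lemma tchildren_nonempty: "C \<in> tchildren d A \<Longrightarrow> C \<noteq> {}"
  by (elim tchildrenE) (use self_in_diam_class in blast)

lemma tchildren_card_less: "C \<in> tchildren d A \<Longrightarrow> card C < card A"
  using tchildren_psubset fin by (simp add: psubset_card_mono)

lemma Union_tchildren:
  assumes "2 \<le> card A"
  shows "\<Union>(tchildren d A) = A"
proof
  show "\<Union>(tchildren d A) \<subseteq> A" using tchildren_subset by blast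
  show "A \<subseteq> \<Union>(tchildren d A)"
    using self_in_diam_class[OF assms] tchildren_eq_diam_class[OF assms] by blast
qed

lemma sum_card_tchildren:
  assumes "2 \<le> card A"
  shows "(\<Sum>C\<in>tchildren d A. card C) = card A"
proof -
  have "pairwise disjnt (tchildren d A)"
    unfolding pairwise_def disjnt_def using tchildren_disjoint by blast
  then have "card (\<Union>(tchildren d A)) = (\<Sum>C\<in>tchildren d A. card C)"
    using card_Union_disjoint finite_subset[OF tchildren_subset fin] by blast
  then show ?thesis using Union_tchildren[OF assms] by simp
qed

lemma two_le_card_tchildren:
  assumes "2 \<le> card A"
  shows "2 \<le> card (tchildren d A)"
proof -
  have "A \<noteq> {}" using assms by auto
  then obtain a b where ab: "a \<in> A" "b \<in> A" "diam A d = d a b"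
    by (rule diam_attained[OF fin])
  have "b \<notin> diam_class d A a" using ab unfolding diam_class_def by simp
  then have "diam_class d A a \<noteq> diam_class d A b"
    using self_in_diam_class[OF assms ab(2)] by blast
  then have "card {diam_class d A a, diam_class d A b} = 2" by simp
  moreover have "{diam_class d A a, diam_class d A b} \<subseteq> tchildren d A"
    using ab tchildren_eq_diam_class[OF assms] by blast
  ultimately show ?thesis using card_mono[OF finite_tchildren[OF fin]] by metis
qed

end

lemma tchildren_ultrametric:
  "ultrametric A d \<Longrightarrow> finite A \<Longrightarrow> C \<in> tchildren d A \<Longrightarrow> ultrametric C d \<and> finite C"
  using tchildren_subset ultrametric_subset finite_subset by meson

section \<open>Unlabelled representing trees\<close>

lemma tnodes_subset: "A \<in> tnodes X d \<Longrightarrow> A \<subseteq> X"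
  by (induction rule: tnodes.induct) (auto dest: tchildren_subset)

lemma tnodes_trans: "A \<in> tnodes C d \<Longrightarrow> C \<in> tnodes X d \<Longrightarrow> A \<in> tnodes X d"
  by (induction rule: tnodes.induct) (auto intro: tnodes.child)

lemma tnodes_unfold: "tnodes X d = insert X (\<Union>C\<in>tchildren d X. tnodes C d)"
proof (intro equalityI subsetI)
  fix A assume "A \<in> tnodes X d"
  then show "A \<in> insert X (\<Union>C\<in>tchildren d X. tnodes C d)"
  proof (induction rule: tnodes.induct)
    case (child A B)
    then show ?case using tnodes.root[of B d] tnodes.child[of A _ d B] by blast
  qed simp
qed (auto intro: tnodes.root tnodes_trans[OF _ tnodes.child[OF tnodes.root]])

lemma tnodes_nonempty:
  assumes "ultrametric X d" "finite X" "X \<noteq> {}" "A \<in> tnodes X d"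
  shows "A \<noteq> {}"
  using assms(4)
proof (induction rule: tnodes.induct)
  case (child A C)
  have "A \<subseteq> X" using tnodes_subset[OF child.hyps(1)] .
  then show ?case
    using tchildren_nonempty[OF ultrametric_subset[OF assms(1)] finite_subset[OF _ assms(2)] child.hyps(2)]
    by blast
qed (use assms in simp)

context
  fixes X d assumes um: "ultrametric X d" and fin: "finite X"
begin

lemma tnodes_of_tchild:
  assumes "C \<in> tchildren d X" "A \<in> tnodes C d"
  shows "A \<subseteq> C" "A \<noteq> {}"
proof -
  show "A \<subseteq> C" using tnodes_subset[OF assms(2)] .
  have "ultrametric C d \<and> finite C" using tchildren_ultrametric[OF um fin assms(1)] .
  then show "A \<noteq> {}"
    using tnodes_nonempty[OF _ _ tchildren_nonempty[OF um fin assms(1)] assms(2)] by blast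
qed

lemma root_notin_tnodes_tchild:
  assumes "C \<in> tchildren d X"
  shows "X \<notin> tnodes C d"
  using tnodes_of_tchild(1)[OF assms] tchildren_psubset[OF um fin assms] by blast

lemma disjoint_family_tnodes_tchildren: "disjoint_family_on (\<lambda>C. tnodes C d) (tchildren d X)"
proof (unfold disjoint_family_on_def, intro ballI impI)
  fix C C' assume C: "C \<in> tchildren d X" and C': "C' \<in> tchildren d X" and "C \<noteq> C'"
  then have "C \<inter> C' = {}" by (rule tchildren_disjoint[OF um fin])
  then have "A \<notin> tnodes C' d" if "A \<in> tnodes C d" for A
    using tnodes_of_tchild[OF C that] tnodes_of_tchild(1)[OF C', of A] by blast
  then show "tnodes C d \<inter> tnodes C' d = {}" by blast
qed

end

datatype rtree = Node "rtree multiset"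

text \<open>shape d A is the unlabelled representing tree of A.  The guard card C < card A holds
  for every child of a finite ultrametric space (tchildren_card_less); it only makes the
  recursion terminate.\<close>
function shape :: "('a \<Rightarrow> 'a \<Rightarrow> real) \<Rightarrow> 'a set \<Rightarrow> rtree" where
  "shape d A = Node (image_mset (shape d) (mset_set {C \<in> tchildren d A. card C < card A}))"
  by auto
termination
  by (relation "measure (\<lambda>(d, A). card A)")
    (auto simp: count_mset_set' simp flip: count_greater_zero_iff split: if_splits)

declare shape.simps [simp del]

lemma shape_unfold:
  assumes "ultrametric A d" "finite A"
  shows "shape d A = Node (image_mset (shape d) (mset_set (tchildren d A)))"
proof -
  have "{C \<in> tchildren d A. card C < card A} = tchildren d A"
    using tchildren_card_less[OF assms] by blast
  then show ?thesis by (subst shape.simps) simp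
qed

definition tree_isomorphism ::
    "('a set \<Rightarrow> 'b set) \<Rightarrow> 'a set \<Rightarrow> ('a \<Rightarrow> 'a \<Rightarrow> real) \<Rightarrow> 'b set \<Rightarrow> ('b \<Rightarrow> 'b \<Rightarrow> real) \<Rightarrow> bool" where
  "tree_isomorphism f X d Y e \<longleftrightarrow> bij_betw f (tnodes X d) (tnodes Y e) \<and> f X = Y \<and>
     (\<forall>A\<in>tnodes X d. tchildren e (f A) = f ` tchildren d A)"

lemma tree_iso_iff_tree_isomorphism: "tree_iso X d Y e \<longleftrightarrow> (\<exists>f. tree_isomorphism f X d Y e)"
proof -
  have iff: "(\<forall>A\<in>tnodes X d. \<forall>B\<in>tnodes X d. B \<in> tchildren d A \<longleftrightarrow> f B \<in> tchildren e (f A))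
      \<longleftrightarrow> (\<forall>A\<in>tnodes X d. tchildren e (f A) = f ` tchildren d A)"
    if bij: "bij_betw f (tnodes X d) (tnodes Y e)" for f
  proof -
    have "tchildren e (f A) = f ` tchildren d A
        \<longleftrightarrow> (\<forall>B\<in>tnodes X d. B \<in> tchildren d A \<longleftrightarrow> f B \<in> tchildren e (f A))"
      if A: "A \<in> tnodes X d" for A
    proof (rule bij_betw_image_eq_iff[OF bij])
      show "tchildren d A \<subseteq> tnodes X d" using tnodes.child[OF A] by blast
      show "tchildren e (f A) \<subseteq> tnodes Y e" using tnodes.child[OF bij_betw_apply[OF bij A]] by blast
    qed
    then show ?thesis by blast
  qed
  show ?thesis
    unfolding tree_iso_def tree_isomorphism_def by (intro ex_cong1 conj_cong[OF refl]) (simp add: iff)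
qed

lemma tree_isomorphism_subtree:
  assumes f: "tree_isomorphism f X d Y e" and C: "C \<in> tnodes X d"
  shows "tree_isomorphism f C d (f C) e"
proof -
  have bij: "bij_betw f (tnodes X d) (tnodes Y e)"
    and ch: "\<And>A. A \<in> tnodes X d \<Longrightarrow> tchildren e (f A) = f ` tchildren d A"
    using f unfolding tree_isomorphism_def by auto
  have sub: "tnodes C d \<subseteq> tnodes X d" using tnodes_trans[OF _ C] by blast
  have "f A \<in> tnodes (f C) e" if "A \<in> tnodes C d" for A
    using that
  proof (induction rule: tnodes.induct)
      case (child A B)
    have "f B \<in> tchildren e (f A)" using ch[of A] child.hyps sub by blast
    then show ?case by (rule tnodes.child[OF child.IH])
  qed (rule tnodes.root)
  moreover have "A' \<in> f ` tnodes C d" if "A' \<in> tnodes (f C) e" for A'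
    using that
  proof (induction rule: tnodes.induct)
    case (child A' B')
    then obtain A where A: "A \<in> tnodes C d" "A' = f A" by blast
    then obtain B where "B \<in> tchildren d A" "B' = f B" using ch[of A] child.hyps(2) sub by blast
    then show ?case using tnodes.child[OF A(1)] by blast
  qed (use tnodes.root in blast)
  ultimately have "bij_betw f (tnodes C d) (tnodes (f C) e)"
    using inj_on_subset[OF bij_betw_imp_inj_on[OF bij] sub] unfolding bij_betw_def by blast
  moreover have "\<forall>A\<in>tnodes C d. tchildren e (f A) = f ` tchildren d A" using ch sub by blast
  ultimately show ?thesis unfolding tree_isomorphism_def by blast
qed

lemma tree_isomorphism_imp_shape_eq:
  assumes "tree_isomorphism f X d Y e" "ultrametric X d" "finite X" "ultrametric Y e" "finite Y"
  shows "shape d X = shape e Y"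
  using assms
proof (induction "card X" arbitrary: X Y f rule: less_induct)
  case less
  have bij: "bij_betw f (tnodes X d) (tnodes Y e)" and "f X = Y"
    and ch: "\<And>A. A \<in> tnodes X d \<Longrightarrow> tchildren e (f A) = f ` tchildren d A"
    using less.prems(1) unfolding tree_isomorphism_def by auto
  have sub: "tchildren d X \<subseteq> tnodes X d" using tnodes.child[OF tnodes.root] by blast
  have chY: "tchildren e Y = f ` tchildren d X" using ch[OF tnodes.root] \<open>f X = Y\<close> by simp
  have "shape e (f C) = shape d C" if C: "C \<in> tchildren d X" for C
  proof -
    have "f C \<in> tnodes Y e" using bij_betw_apply[OF bij] C sub by blast
    then have "f C \<subseteq> Y" by (rule tnodes_subset)
    then have "ultrametric (f C) e \<and> finite (f C)"
      using ultrametric_subset[OF less.prems(4)] finite_subset[OF _ less.prems(5)] by blast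
    moreover have "tree_isomorphism f C d (f C) e"
      using tree_isomorphism_subtree[OF less.prems(1)] C sub by blast
    ultimately show ?thesis
      using less.hyps[OF tchildren_card_less[OF less.prems(2,3) C]]
        tchildren_ultrametric[OF less.prems(2,3) C] by simp
  qed
  moreover have "mset_set (tchildren e Y) = image_mset f (mset_set (tchildren d X))"
    using chY image_mset_mset_set[OF inj_on_subset[OF bij_betw_imp_inj_on[OF bij] sub]] by simp
  ultimately have "image_mset (shape e) (mset_set (tchildren e Y))
      = image_mset (shape d) (mset_set (tchildren d X))"
    using finite_tchildren[OF less.prems(3)]
    by (simp add: multiset.map_comp) (rule image_mset_cong, simp)
  then show ?case
    by (simp only: shape_unfold[OF less.prems(2,3)] shape_unfold[OF less.prems(4,5)])
qed

lemma bij_betw_tnodes_join: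
  assumes X: "ultrametric X d" "finite X" and Y: "ultrametric Y e" "finite Y"
    and g: "bij_betw g (tchildren d X) (tchildren e Y)"
    and F: "F X = Y" "\<And>C. C \<in> tchildren d X \<Longrightarrow> bij_betw F (tnodes C d) (tnodes (g C) e)"
  shows "bij_betw F (tnodes X d) (tnodes Y e)"
proof -
  define U where "U = (\<Union>C\<in>tchildren d X. tnodes C d)"
  define V where "V = (\<Union>C'\<in>tchildren e Y. tnodes C' e)"
  have "bij_betw F U (\<Union>C\<in>tchildren d X. tnodes (g C) e)"
    unfolding U_def
  proof (rule bij_betw_UNION_disjoint[OF _ F(2)])
    show "disjoint_family_on (\<lambda>C. tnodes (g C) e) (tchildren d X)"
    proof (unfold disjoint_family_on_def, intro ballI impI)
      fix C C' assume "C \<in> tchildren d X" "C' \<in> tchildren d X" "C \<noteq> C'"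
      moreover have "g C \<noteq> g C'"
        using bij_betw_imp_inj_on[OF g] calculation by (auto dest: inj_onD)
      ultimately show "tnodes (g C) e \<inter> tnodes (g C') e = {}"
        using disjoint_family_onD[OF disjoint_family_tnodes_tchildren[OF Y]] bij_betw_apply[OF g]
        by blast
    qed
  qed
  moreover have "(\<Union>C\<in>tchildren d X. tnodes (g C) e) = V"
    unfolding V_def bij_betw_imp_surj_on[OF g, symmetric] by (simp add: image_image)
  ultimately have "bij_betw F U V" by simp
  moreover have "X \<notin> U" "Y \<notin> V"
    using root_notin_tnodes_tchild[OF X] root_notin_tnodes_tchild[OF Y] unfolding U_def V_def by auto
  ultimately have "bij_betw F (U \<union> {X}) (V \<union> {Y})"
    using notIn_Un_bij_betw[of X U F V] F(1) by simp
  then show ?thesis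
    using tnodes_unfold[of X d] tnodes_unfold[of Y e] unfolding U_def V_def by simp
qed

lemma tree_isomorphism_join:
  assumes X: "ultrametric X d" "finite X" and Y: "ultrametric Y e" "finite Y"
    and g: "bij_betw g (tchildren d X) (tchildren e Y)"
    and fc: "\<And>C. C \<in> tchildren d X \<Longrightarrow> tree_isomorphism (fc C) C d (g C) e"
  shows "\<exists>F. tree_isomorphism F X d Y e"
proof -
  define F where
    "F A = (if A = X then Y else fc (THE C. C \<in> tchildren d X \<and> A \<in> tnodes C d) A)" for A
  have fcC: "bij_betw (fc C) (tnodes C d) (tnodes (g C) e)" "fc C C = g C"
    "\<And>A. A \<in> tnodes C d \<Longrightarrow> tchildren e (fc C A) = fc C ` tchildren d A"
    if "C \<in> tchildren d X" for C
    using fc[OF that] unfolding tree_isomorphism_def by auto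
  have F_fc: "F A = fc C A" if C: "C \<in> tchildren d X" "A \<in> tnodes C d" for C A
  proof -
    have "(THE C. C \<in> tchildren d X \<and> A \<in> tnodes C d) = C"
    proof (rule the_equality)
      fix C' assume "C' \<in> tchildren d X \<and> A \<in> tnodes C' d"
      then show "C' = C"
        using C disjoint_family_onD[OF disjoint_family_tnodes_tchildren[OF X], of C' C] by blast
    qed (use C in blast)
    moreover have "A \<noteq> X" using root_notin_tnodes_tchild[OF X C(1)] C(2) by blast
    ultimately show ?thesis unfolding F_def by simp
  qed
  have FX: "F X = Y" by (simp add: F_def)
  have "bij_betw F (tnodes C d) (tnodes (g C) e)" if "C \<in> tchildren d X" for C
    using bij_betw_cong[of "tnodes C d" F "fc C"] F_fc[OF that] fcC(1)[OF that] by blast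
  then have "bij_betw F (tnodes X d) (tnodes Y e)" using bij_betw_tnodes_join[OF X Y g, of F, OF FX] by blast
  moreover have "tchildren e (F A) = F ` tchildren d A" if A: "A \<in> tnodes X d" for A
  proof (cases "A = X")
    case True
    have "F ` tchildren d X = g ` tchildren d X"
      using F_fc[OF _ tnodes.root] fcC(2) by (intro image_cong) auto
    then show ?thesis using True FX bij_betw_imp_surj_on[OF g] by simp
  next
    case False
    then have "A \<in> (\<Union>C\<in>tchildren d X. tnodes C d)" using A tnodes_unfold[of X d] by blast
    then obtain C where C: "C \<in> tchildren d X" "A \<in> tnodes C d" by blast
    have "F ` tchildren d A = fc C ` tchildren d A"
      using F_fc[OF C(1) tnodes.child[OF C(2)]] by (intro image_cong) auto
    then show ?thesis using F_fc[OF C] fcC(3)[OF C] by simp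
  qed
  ultimately show ?thesis using FX unfolding tree_isomorphism_def by blast
qed

lemma shape_eq_imp_tree_isomorphism:
  assumes "ultrametric X d" "finite X" "ultrametric Y e" "finite Y" "shape d X = shape e Y"
  shows "\<exists>f. tree_isomorphism f X d Y e"
  using assms
proof (induction "card X" arbitrary: X Y rule: less_induct)
  case less
  have "image_mset (shape d) (mset_set (tchildren d X)) = image_mset (shape e) (mset_set (tchildren e Y))"
    using less.prems(5) by (simp add: shape_unfold[OF less.prems(1,2)] shape_unfold[OF less.prems(3,4)])
  then obtain g where g: "bij_betw g (tchildren d X) (tchildren e Y)"
    and sh: "\<And>C. C \<in> tchildren d X \<Longrightarrow> shape e (g C) = shape d C"
    by (rule image_mset_eq_imp_bij_betw[OF finite_tchildren[OF less.prems(2)] finite_tchildren[OF less.prems(4)]]) blast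
  have "\<exists>f. tree_isomorphism f C d (g C) e" if C: "C \<in> tchildren d X" for C
  proof -
    have "ultrametric C d \<and> finite C" "ultrametric (g C) e \<and> finite (g C)"
      using tchildren_ultrametric[OF less.prems(1,2) C]
        tchildren_ultrametric[OF less.prems(3,4) bij_betw_apply[OF g C]] by blast+
    then show ?thesis
      using less.hyps[OF tchildren_card_less[OF less.prems(1,2) C]] sh[OF C] by simp
  qed
  then obtain fc where "\<And>C. C \<in> tchildren d X \<Longrightarrow> tree_isomorphism (fc C) C d (g C) e"
    by metis
  then show ?case by (rule tree_isomorphism_join[OF less.prems(1-4) g])
qed

lemma tree_iso_iff_shape_eq:
  assumes "ultrametric X d" "finite X" "ultrametric Y e" "finite Y"
  shows "tree_iso X d Y e \<longleftrightarrow> shape d X = shape e Y"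
  using tree_iso_iff_tree_isomorphism tree_isomorphism_imp_shape_eq[OF _ assms]
    shape_eq_imp_tree_isomorphism[OF assms] by blast

section \<open>Spaces of U have binary trees\<close>

lemma finite_Sp: "finite A \<Longrightarrow> finite (Sp A d)"
proof -
  have "Sp A d \<subseteq> case_prod d ` (A \<times> A)" unfolding Sp_def by auto
  then show "finite A \<Longrightarrow> ?thesis" using finite_subset by blast
qed

context
  fixes A d assumes um: "ultrametric A d" and fin: "finite A"
begin

lemma Sp_subset_insert_diam:
  assumes "2 \<le> card A"
  shows "Sp A d \<subseteq> insert (diam A d) (\<Union>C\<in>tchildren d A. Sp C d)"
proof
  fix r assume "r \<in> Sp A d"
  then obtain x y where xy: "x \<in> A" "y \<in> A" "x \<noteq> y" "r = d x y" unfolding Sp_def by blast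
  show "r \<in> insert (diam A d) (\<Union>C\<in>tchildren d A. Sp C d)"
  proof (cases "y \<in> diam_class d A x")
    case True
    have "x \<in> diam_class d A x" by (rule self_in_diam_class[OF um fin assms xy(1)])
    then have "r \<in> Sp (diam_class d A x) d" unfolding Sp_def using True xy(3,4) by blast
    moreover have "diam_class d A x \<in> tchildren d A"
      using tchildren_eq_diam_class[OF assms] xy(1) by blast
    ultimately show ?thesis by blast
  next
    case False
    then have "r = diam A d"
      using dist_le_diam[OF fin xy(1,2), of d] xy(2,4) unfolding diam_class_def by simp
    then show ?thesis by simp
  qed
qed

lemma card_Sp_le_sum_tchildren:
  assumes "2 \<le> card A"
  shows "card (Sp A d) \<le> Suc (\<Sum>C\<in>tchildren d A. card (Sp C d))"
proof -
  have fin_ch: "finite (tchildren d A)" by (rule finite_tchildren[OF fin])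
  have fin_U: "finite (\<Union>C\<in>tchildren d A. Sp C d)"
    using fin_ch tchildren_ultrametric[OF um fin] finite_Sp by blast
  have "card (Sp A d) \<le> card (insert (diam A d) (\<Union>C\<in>tchildren d A. Sp C d))"
    using card_mono[OF _ Sp_subset_insert_diam[OF assms]] fin_U by simp
  also have "\<dots> \<le> Suc (card (\<Union>C\<in>tchildren d A. Sp C d))"
    by (simp add: card_insert_if fin_U)
  also have "\<dots> \<le> Suc (\<Sum>C\<in>tchildren d A. card (Sp C d))"
    using card_UN_le[OF fin_ch] by simp
  finally show ?thesis .
qed

end

lemma card_Sp_tchildren_bound:
  assumes A: "ultrametric A d" "finite A" "2 \<le> card A"
    and le: "\<And>C. C \<in> tchildren d A \<Longrightarrow> Suc (card (Sp C d)) \<le> card C"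
  shows "card (Sp A d) + card (tchildren d A) + (\<Sum>C\<in>tchildren d A. card C - Suc (card (Sp C d)))
           \<le> Suc (card A)"
proof -
  have "(\<Sum>C\<in>tchildren d A. card C - Suc (card (Sp C d))) + (\<Sum>C\<in>tchildren d A. Suc (card (Sp C d)))
      = (\<Sum>C\<in>tchildren d A. card C)"
    by (simp only: sum.distrib[symmetric] le_add_diff_inverse2 le cong: sum.cong)
  then show ?thesis
    using sum_card_tchildren[OF A] card_Sp_le_sum_tchildren[OF A] by (simp add: sum_Suc)
qed

lemma card_Sp_less_card:
  assumes "ultrametric A d" "finite A" "A \<noteq> {}"
  shows "card (Sp A d) < card A"
  using assms
proof (induction "card A" arbitrary: A rule: less_induct)
  case less
  show ?case
  proof (cases "2 \<le> card A")
    case False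
    then have "\<forall>x\<in>A. \<forall>y\<in>A. x = y" using card_le_Suc0_iff_eq[OF less.prems(2)] by simp
    then have "Sp A d = {}" unfolding Sp_def by blast
    then show ?thesis using less.prems(2,3) by (simp add: card_gt_0_iff)
  next
    case True
    note A = less.prems(1,2) True
    have "Suc (card (Sp C d)) \<le> card C" if C: "C \<in> tchildren d A" for C
      using less.hyps[OF tchildren_card_less[OF A(1,2) C]] tchildren_ultrametric[OF A(1,2) C]
        tchildren_nonempty[OF A(1,2) C] by simp
    then show ?thesis
      using card_Sp_tchildren_bound[OF A] two_le_card_tchildren[OF A] by fastforce
  qed
qed

text \<open>For spaces of U the bound of card_Sp_tchildren_bound is attained, which forces exactly two
  children, each again in U.\<close>
lemma in_U_tchildren:
  assumes U: "in_U A d" and two: "2 \<le> card A"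
  obtains C1 C2 where "tchildren d A = {C1, C2}" "C1 \<noteq> C2" "in_U C1 d" "in_U C2 d"
proof -
  have A: "ultrametric A d" "finite A" "2 \<le> card A" and Sp: "card (Sp A d) = card A - 1"
    using U two unfolding in_U_def by auto
  have C: "ultrametric C d" "finite C" "C \<noteq> {}" if "C \<in> tchildren d A" for C
    using tchildren_ultrametric[OF A(1,2) that] tchildren_nonempty[OF A(1,2) that] by auto
  have le: "Suc (card (Sp C d)) \<le> card C" if "C \<in> tchildren d A" for C
    using card_Sp_less_card[OF C[OF that]] by simp
  have bound: "card (tchildren d A) + (\<Sum>C\<in>tchildren d A. card C - Suc (card (Sp C d))) \<le> 2"
    using card_Sp_tchildren_bound[OF A le] Sp two by linarith
  then have two_ch: "card (tchildren d A) = 2" using two_le_card_tchildren[OF A] by linarith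
  with bound have "(\<Sum>C\<in>tchildren d A. card C - Suc (card (Sp C d))) = 0" by linarith
  then have tight: "card C - Suc (card (Sp C d)) = 0" if "C \<in> tchildren d A" for C
    using finite_tchildren[OF A(2)] that by simp
  have inU: "in_U C d" if "C \<in> tchildren d A" for C
  proof -
    have "card (Sp C d) = card C - 1" using le[OF that] tight[OF that] by linarith
    then show ?thesis using C[OF that] unfolding in_U_def by blast
  qed
  obtain C1 C2 where "tchildren d A = {C1, C2}" "C1 \<noteq> C2"
    using two_ch unfolding card_2_iff by blast
  moreover from this have "in_U C1 d" "in_U C2 d" using inU by auto
  ultimately show ?thesis by (rule that)
qed

inductive binary :: "rtree \<Rightarrow> nat \<Rightarrow> bool" where
  leaf: "binary (Node {#}) 1"
| node: "binary s p \<Longrightarrow> binary t q \<Longrightarrow> binary (Node {#s, t#}) (p + q)"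

lemma in_U_binary:
  assumes "in_U A d"
  shows "binary (shape d A) (card A)"
  using assms
proof (induction "card A" arbitrary: A rule: less_induct)
  case less
  have A: "ultrametric A d" "finite A" "A \<noteq> {}" using less.prems unfolding in_U_def by auto
  show ?case
  proof (cases "2 \<le> card A")
    case False
    moreover have "0 < card A" using A(2,3) by (simp add: card_gt_0_iff)
    ultimately have "card A = 1" by linarith
    moreover have "shape d A = Node {#}"
      using shape_unfold[OF A(1,2)] tchildren_small[of A d] \<open>card A = 1\<close> by simp
    ultimately show ?thesis using binary.leaf by simp
  next
    case True
    obtain C1 C2 where C: "tchildren d A = {C1, C2}" "C1 \<noteq> C2" "in_U C1 d" "in_U C2 d"
      using in_U_tchildren[OF less.prems True] by blast
    have "card C1 < card A" "card C2 < card A"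
      using tchildren_card_less[OF A(1,2)] C(1) by auto
    then have "binary (shape d C1) (card C1)" "binary (shape d C2) (card C2)"
      using less.hyps C(3,4) by blast+
    moreover have "card A = card C1 + card C2"
      using sum_card_tchildren[OF A(1,2) True] C(1,2) by simp
    moreover have "shape d A = Node {#shape d C1, shape d C2#}"
      using shape_unfold[OF A(1,2)] C(1,2) by simp
    ultimately show ?thesis using binary.node by metis
  qed
qed

section \<open>Realising binary trees in U\<close>

context
  fixes A :: "'a set" and d :: "'a \<Rightarrow> 'a \<Rightarrow> real"
    and g :: "'a \<Rightarrow> 'b" and e :: "'b \<Rightarrow> 'b \<Rightarrow> real" and f :: "real \<Rightarrow> real"
  assumes um: "ultrametric A d" and fin: "finite A" and inj: "inj_on g A"
    and f_mono: "strict_mono_on {0..} f" and f_0: "f 0 = 0"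
    and e_g: "\<And>x y. x \<in> A \<Longrightarrow> y \<in> A \<Longrightarrow> e (g x) (g y) = f (d x y)"
begin

lemma rescale_le_iff:
  assumes "x \<in> A" "y \<in> A" "u \<in> A" "v \<in> A"
  shows "e (g x) (g y) \<le> e (g u) (g v) \<longleftrightarrow> d x y \<le> d u v"
  using strict_mono_on_less_eq[OF f_mono] ultrametric_nonneg[OF um] assms by (simp add: e_g)

lemma ultrametric_rescale: "ultrametric (g ` A) e"
proof -
  have "0 \<le> e (g x) (g y) \<and> (e (g x) (g y) = 0 \<longleftrightarrow> g x = g y) \<and> e (g x) (g y) = e (g y) (g x)"
    if xy: "x \<in> A" "y \<in> A" for x y
  proof -
    have "0 \<le> d x y" by (rule ultrametric_nonneg[OF um xy])
    then have "0 \<le> f (d x y)" "f (d x y) = 0 \<longleftrightarrow> d x y = 0"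
      using strict_mono_on_leD[OF f_mono, of 0 "d x y"] strict_mono_on_eqD[OF f_mono, of "d x y" 0] f_0
      by auto
    then show ?thesis
      using ultrametric_eq_0_iff[OF um xy] inj_on_eq_iff[OF inj xy] ultrametric_sym[OF um xy] e_g xy
      by simp
  qed
  moreover have "e (g x) (g y) \<le> max (e (g x) (g z)) (e (g z) (g y))"
    if xyz: "x \<in> A" "y \<in> A" "z \<in> A" for x y z
  proof -
    have "d x y \<le> d x z \<or> d x y \<le> d z y"
      using ultrametric_triangle[OF um xyz] by linarith
    then have "e (g x) (g y) \<le> e (g x) (g z) \<or> e (g x) (g y) \<le> e (g z) (g y)"
      using rescale_le_iff xyz by blast
    then show ?thesis by (simp add: le_max_iff_disj)
  qed
  ultimately show ?thesis unfolding ultrametric_def Ball_image_comp comp_def by blast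
qed

lemma Sp_rescale: "Sp (g ` A) e = f ` Sp A d"
proof (intro equalityI subsetI)
  fix t assume "t \<in> Sp (g ` A) e"
  then obtain x y where "x \<in> A" "y \<in> A" "g x \<noteq> g y" "t = e (g x) (g y)" unfolding Sp_def by blast
  then show "t \<in> f ` Sp A d" unfolding Sp_def using e_g by auto
next
  fix t assume "t \<in> f ` Sp A d"
  then obtain x y where xy: "x \<in> A" "y \<in> A" "x \<noteq> y" "t = f (d x y)" unfolding Sp_def by blast
  then have "t = e (g x) (g y)" "g x \<noteq> g y" using e_g inj_on_eq_iff[OF inj] by auto
  then show "t \<in> Sp (g ` A) e" unfolding Sp_def using xy(1,2) by blast
qed

lemma diam_rescale:
  assumes "C \<subseteq> A" "C \<noteq> {}"
  shows "diam (g ` C) e = f (diam C d)"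
proof -
  have fC: "finite C" using finite_subset[OF assms(1) fin] .
  obtain a b where ab: "a \<in> C" "b \<in> C" "diam C d = d a b"
    using diam_attained[OF fC assms(2)] by blast
  have "diam (g ` C) e = e (g a) (g b)"
    unfolding diam_def
  proof (rule Max_eqI)
    show "finite {e x y |x y. x \<in> g ` C \<and> y \<in> g ` C}" using finite_distances fC by blast
    show "e (g a) (g b) \<in> {e x y |x y. x \<in> g ` C \<and> y \<in> g ` C}" using ab by blast
    fix t assume "t \<in> {e x y |x y. x \<in> g ` C \<and> y \<in> g ` C}"
    then obtain x y where xy: "x \<in> C" "y \<in> C" "t = e (g x) (g y)" by blast
    have "d x y \<le> d a b" using dist_le_diam[OF fC xy(1,2), of d] ab(3) by simp
    then show "t \<le> e (g a) (g b)"
      using rescale_le_iff[of x y a b] xy ab(1,2) assms(1) by blast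
  qed
  moreover have "a \<in> A" "b \<in> A" using ab(1,2) assms(1) by auto
  ultimately show ?thesis using e_g ab(3) by simp
qed

lemma tchildren_rescale:
  assumes "C \<subseteq> A"
  shows "tchildren e (g ` C) = image g ` tchildren d C"
proof (cases "2 \<le> card C")
  case False
  then show ?thesis
    using card_image[OF inj_on_subset[OF inj assms]] by (simp add: tchildren_small)
next
  case True
  have C: "C \<noteq> {}" using True by auto
  have cls: "diam_class e (g ` C) (g x) = g ` diam_class d C x" if x: "x \<in> C" for x
  proof -
    have "e (g x) (g y) < diam (g ` C) e \<longleftrightarrow> d x y < diam C d" if y: "y \<in> C" for y
    proof -
      have "0 \<le> d x y" using ultrametric_nonneg[OF um] x y assms by blast
      moreover have "0 \<le> diam C d"
        using diam_pos[OF ultrametric_subset[OF um assms] finite_subset[OF assms fin] True] by simp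
      moreover have "e (g x) (g y) = f (d x y)" using e_g x y assms by blast
      ultimately show ?thesis using diam_rescale[OF assms C] strict_mono_on_less[OF f_mono] by simp
    qed
    then show ?thesis unfolding diam_class_def by blast
  qed
  have "2 \<le> card (g ` C)" using True card_image[OF inj_on_subset[OF inj assms]] by simp
  then have "tchildren e (g ` C) = diam_class e (g ` C) ` g ` C"
    by (rule tchildren_eq_diam_class)
  also have "\<dots> = (\<lambda>x. g ` diam_class d C x) ` C"
    unfolding image_image by (rule image_cong[OF refl cls])
  also have "\<dots> = image g ` tchildren d C"
    unfolding tchildren_eq_diam_class[OF True] image_image ..
  finally show ?thesis .
qed

lemma shape_rescale: "C \<subseteq> A \<Longrightarrow> shape e (g ` C) = shape d C"
proof (induction "card C" arbitrary: C rule: less_induct)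
  case less
  have C: "ultrametric C d" "finite C"
    using ultrametric_subset[OF um less.prems] finite_subset[OF less.prems fin] by auto
  have gC: "ultrametric (g ` C) e" "finite (g ` C)"
    using ultrametric_subset[OF ultrametric_rescale image_mono[OF less.prems]] C(2) by auto
  have sub: "tchildren d C \<subseteq> Pow A" using tchildren_subset less.prems by blast
  have "shape e (g ` K) = shape d K" if K: "K \<in> tchildren d C" for K
  proof -
    have "K \<subseteq> A" using tchildren_subset[OF K] less.prems by blast
    then show ?thesis using less.hyps[OF tchildren_card_less[OF C K]] by simp
  qed
  moreover have "mset_set (tchildren e (g ` C)) = image_mset (image g) (mset_set (tchildren d C))"
    using tchildren_rescale[OF less.prems] image_mset_mset_set[OF inj_on_subset[OF inj_on_image_Pow[OF inj] sub]]
    by simp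
  ultimately have "image_mset (shape e) (mset_set (tchildren e (g ` C)))
      = image_mset (shape d) (mset_set (tchildren d C))"
    using finite_tchildren[OF C(2)]
    by (simp add: multiset.map_comp) (rule image_mset_cong, simp)
  then show ?case by (simp only: shape_unfold[OF C] shape_unfold[OF gC])
qed

lemma in_U_rescale:
  assumes "in_U A d"
  shows "in_U (g ` A) e"
proof -
  have "Sp A d \<subseteq> {0..}" using ultrametric_nonneg[OF um] unfolding Sp_def by auto
  then have "card (Sp (g ` A) e) = card (Sp A d)"
    using Sp_rescale card_image[OF inj_on_subset[OF strict_mono_on_imp_inj_on[OF f_mono]]] by simp
  then show ?thesis
    using assms ultrametric_rescale card_image[OF inj] unfolding in_U_def by simp
qed

end

context
  fixes X1 X2 :: "'a set" and d :: "'a \<Rightarrow> 'a \<Rightarrow> real" and r :: real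
  assumes U1: "in_U X1 d" and U2: "in_U X2 d" and disj: "X1 \<inter> X2 = {}"
    and cross: "\<And>x y. x \<in> X1 \<Longrightarrow> y \<in> X2 \<Longrightarrow> d x y = r \<and> d y x = r"
    and below: "\<And>x y. x \<in> X1 \<and> y \<in> X1 \<or> x \<in> X2 \<and> y \<in> X2 \<Longrightarrow> d x y < r"
begin

lemma join_dist_cases:
  assumes "x \<in> X1 \<union> X2" "y \<in> X1 \<union> X2"
  shows "x \<in> X1 \<and> y \<in> X1 \<or> x \<in> X2 \<and> y \<in> X2 \<Longrightarrow> d x y < r"
    and "\<not> (x \<in> X1 \<and> y \<in> X1 \<or> x \<in> X2 \<and> y \<in> X2) \<Longrightarrow> d x y = r"
  using assms below cross by blast+

lemma join_dist_le: "x \<in> X1 \<union> X2 \<Longrightarrow> y \<in> X1 \<union> X2 \<Longrightarrow> d x y \<le> r"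
  using join_dist_cases[of x y] by (cases "x \<in> X1 \<and> y \<in> X1 \<or> x \<in> X2 \<and> y \<in> X2") auto

lemma join_dist_metric:
  assumes xy: "x \<in> X1 \<union> X2" "y \<in> X1 \<union> X2"
  shows "0 \<le> d x y \<and> (d x y = 0 \<longleftrightarrow> x = y) \<and> d x y = d y x"
proof -
  have um: "ultrametric X1 d" "ultrametric X2 d" using U1 U2 unfolding in_U_def by auto
  show ?thesis
  proof (cases "x \<in> X1 \<and> y \<in> X1 \<or> x \<in> X2 \<and> y \<in> X2")
    case True
    then consider "x \<in> X1" "y \<in> X1" | "x \<in> X2" "y \<in> X2" by blast
    then show ?thesis
    proof cases
      case 1
      then show ?thesis using ultrametric_nonneg[OF um(1)] ultrametric_eq_0_iff[OF um(1)]
          ultrametric_sym[OF um(1)] by simp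
    next
      case 2
      then show ?thesis using ultrametric_nonneg[OF um(2)] ultrametric_eq_0_iff[OF um(2)]
          ultrametric_sym[OF um(2)] by simp
    qed
  next
    case False
    have "0 < r" using below[of x x] ultrametric_eq_0_iff[OF um(1), of x x]
        ultrametric_eq_0_iff[OF um(2), of x x] xy by auto
    moreover have "x \<noteq> y" using False xy by blast
    moreover have "\<not> (y \<in> X1 \<and> x \<in> X1 \<or> y \<in> X2 \<and> x \<in> X2)" using False by blast
    ultimately show ?thesis using join_dist_cases(2)[OF xy False] join_dist_cases(2)[OF xy(2,1)] by simp
  qed
qed

lemma ultrametric_join: "ultrametric (X1 \<union> X2) d"
proof -
  have um: "ultrametric X1 d" "ultrametric X2 d" using U1 U2 unfolding in_U_def by auto
  have "d x y \<le> max (d x z) (d z y)"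
    if xyz: "x \<in> X1 \<union> X2" "y \<in> X1 \<union> X2" "z \<in> X1 \<union> X2" for x y z
  proof (cases "x \<in> X1 \<and> y \<in> X1 \<and> z \<in> X1 \<or> x \<in> X2 \<and> y \<in> X2 \<and> z \<in> X2")
    case True
    then show ?thesis using ultrametric_triangle[OF um(1)] ultrametric_triangle[OF um(2)] by blast
  next
    case False
    then have "\<not> (x \<in> X1 \<and> z \<in> X1 \<or> x \<in> X2 \<and> z \<in> X2) \<or>
        \<not> (z \<in> X1 \<and> y \<in> X1 \<or> z \<in> X2 \<and> y \<in> X2)"
      using disj by blast
    then have "d x z = r \<or> d z y = r"
      using join_dist_cases(2)[OF xyz(1,3)] join_dist_cases(2)[OF xyz(3,2)] by blast
    then show ?thesis using join_dist_le[OF xyz(1,2)] by (auto simp: le_max_iff_disj)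
  qed
  then show ?thesis using join_dist_metric unfolding ultrametric_def by blast
qed

lemma diam_join: "diam (X1 \<union> X2) d = r"
  unfolding diam_def
proof (rule Max_eqI)
  show "finite {d x y |x y. x \<in> X1 \<union> X2 \<and> y \<in> X1 \<union> X2}"
    using finite_distances U1 U2 unfolding in_U_def by blast
  obtain x y where "x \<in> X1" "y \<in> X2" using U1 U2 unfolding in_U_def by blast
  then show "r \<in> {d x y |x y. x \<in> X1 \<union> X2 \<and> y \<in> X1 \<union> X2}" using cross by blast
  fix t assume "t \<in> {d x y |x y. x \<in> X1 \<union> X2 \<and> y \<in> X1 \<union> X2}"
  then obtain x y where "x \<in> X1 \<union> X2" "y \<in> X1 \<union> X2" "t = d x y" by blast
  then show "t \<le> r" using join_dist_le by simp
qed

lemma tchildren_join: "tchildren d (X1 \<union> X2) = {X1, X2}"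
proof -
  have fin: "finite X1" "finite X2" and ne: "X1 \<noteq> {}" "X2 \<noteq> {}"
    using U1 U2 unfolding in_U_def by auto
  then have "0 < card X1" "0 < card X2" by (simp_all add: card_gt_0_iff)
  then have two: "2 \<le> card (X1 \<union> X2)" using card_Un_disjoint[OF fin disj] by simp
  have cls1: "diam_class d (X1 \<union> X2) x = X1" if x: "x \<in> X1" for x
  proof -
    have "d x y < r \<longleftrightarrow> y \<in> X1" if "y \<in> X1 \<union> X2" for y
      using below[of x y] cross[OF x, of y] x that by auto
    then show ?thesis unfolding diam_class_def diam_join by blast
  qed
  have cls2: "diam_class d (X1 \<union> X2) x = X2" if x: "x \<in> X2" for x
  proof -
    have "d x y < r \<longleftrightarrow> y \<in> X2" if "y \<in> X1 \<union> X2" for y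
      using below[of x y] cross[OF _ x, of y] x that by auto
    then show ?thesis unfolding diam_class_def diam_join by blast
  qed
  have "diam_class d (X1 \<union> X2) ` X1 = {X1}" "diam_class d (X1 \<union> X2) ` X2 = {X2}"
    using cls1 cls2 ne by auto
  then show ?thesis unfolding tchildren_eq_diam_class[OF two] image_Un by (simp add: insert_commute)
qed

lemma Sp_join: "Sp (X1 \<union> X2) d = insert r (Sp X1 d \<union> Sp X2 d)"
proof -
  obtain x y where "x \<in> X1" "y \<in> X2" using U1 U2 unfolding in_U_def by blast
  then have "r \<in> Sp (X1 \<union> X2) d" unfolding Sp_def using cross disj by blast
  moreover have "Sp X1 d \<union> Sp X2 d \<subseteq> Sp (X1 \<union> X2) d" unfolding Sp_def by blast
  moreover have "Sp (X1 \<union> X2) d \<subseteq> insert r (Sp X1 d \<union> Sp X2 d)"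
  proof
    fix t assume "t \<in> Sp (X1 \<union> X2) d"
    then obtain x y where "x \<in> X1 \<union> X2" "y \<in> X1 \<union> X2" "x \<noteq> y" "t = d x y" unfolding Sp_def by blast
    then show "t \<in> insert r (Sp X1 d \<union> Sp X2 d)"
      using join_dist_cases(2)[of x y] unfolding Sp_def by blast
  qed
  ultimately show ?thesis by blast
qed

lemma in_U_join:
  assumes "Sp X1 d \<inter> Sp X2 d = {}"
  shows "in_U (X1 \<union> X2) d"
proof -
  have fin: "finite X1" "finite X2" and ne: "X1 \<noteq> {}" "X2 \<noteq> {}"
    and Sp: "card (Sp X1 d) = card X1 - 1" "card (Sp X2 d) = card X2 - 1"
    using U1 U2 unfolding in_U_def by auto
  have "r \<notin> Sp X1 d \<union> Sp X2 d" using below unfolding Sp_def by fastforce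
  moreover have "card (Sp X1 d \<union> Sp X2 d) = card (Sp X1 d) + card (Sp X2 d)"
    using card_Un_disjoint[OF finite_Sp finite_Sp assms] fin by blast
  moreover have "finite (Sp X1 d \<union> Sp X2 d)" using finite_Sp fin by blast
  ultimately have "card (Sp (X1 \<union> X2) d) = Suc (card (Sp X1 d) + card (Sp X2 d))"
    unfolding Sp_join by simp
  moreover have "0 < card X1" "0 < card X2" using fin ne by (simp_all add: card_gt_0_iff)
  ultimately have "card (Sp (X1 \<union> X2) d) = card (X1 \<union> X2) - 1"
    using card_Un_disjoint[OF fin disj] Sp by simp
  then show ?thesis using ultrametric_join fin ne unfolding in_U_def by simp
qed

lemma shape_join: "shape d (X1 \<union> X2) = Node {#shape d X1, shape d X2#}"
proof -
  have "X1 \<noteq> X2" using disj U1 unfolding in_U_def by auto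
  then show ?thesis
    using shape_unfold[OF ultrametric_join] tchildren_join U1 U2 unfolding in_U_def by simp
qed

end

definition squash :: "real \<Rightarrow> real" where
  "squash t = t / (1 + t)"

definition squash_above_1 :: "real \<Rightarrow> real" where
  "squash_above_1 t = (if t = 0 then 0 else 1 + squash t)"

lemma squash_nonneg_less_1: "0 \<le> t \<Longrightarrow> 0 \<le> squash t \<and> squash t < 1"
  unfolding squash_def by (simp add: divide_less_eq)

lemma strict_mono_on_squash: "strict_mono_on {0..} squash"
  by (rule strict_mono_onI) (simp add: squash_def divide_less_eq less_divide_eq field_simps)

lemma one_less_squash_above_1: "0 < t \<Longrightarrow> 1 < squash_above_1 t"
  unfolding squash_above_1_def squash_def by simp

lemma squash_above_1_less_2: "0 \<le> t \<Longrightarrow> squash_above_1 t < 2"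
  unfolding squash_above_1_def using squash_nonneg_less_1[of t] by simp

lemma strict_mono_on_squash_above_1: "strict_mono_on {0..} squash_above_1"
proof (rule strict_mono_onI)
  fix s t :: real assume "s \<in> {0..}" "t \<in> {0..}" "s < t"
  then show "squash_above_1 s < squash_above_1 t"
    using strict_mono_onD[OF strict_mono_on_squash] one_less_squash_above_1[of t]
    by (cases "s = 0") (auto simp: squash_above_1_def)
qed

text \<open>Distances are squashed into [0, 1) on the even points and into {0} \<union> (1, 2) on the odd
  points, so both spectra stay disjoint and below the distance 2 between the two parts.\<close>
definition join_metric :: "(nat \<Rightarrow> nat \<Rightarrow> real) \<Rightarrow> (nat \<Rightarrow> nat \<Rightarrow> real) \<Rightarrow> nat \<Rightarrow> nat \<Rightarrow> real" where
  "join_metric d1 d2 a b =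
     (if even a \<and> even b then squash (d1 (a div 2) (b div 2))
      else if odd a \<and> odd b then squash_above_1 (d2 (a div 2) (b div 2)) else 2)"

lemma join_metric_evens:
  fixes d1 d2 :: "nat \<Rightarrow> nat \<Rightarrow> real"
  assumes U: "in_U X d1"
  shows "in_U ((\<lambda>x. 2 * x) ` X) (join_metric d1 d2)"
    "shape (join_metric d1 d2) ((\<lambda>x. 2 * x) ` X) = shape d1 X"
    "Sp ((\<lambda>x. 2 * x) ` X) (join_metric d1 d2) \<subseteq> {..<1}"
proof -
  have X: "ultrametric X d1" "finite X" using U unfolding in_U_def by auto
  have inj: "inj_on (\<lambda>x::nat. 2 * x) X" by (simp add: inj_on_def)
  have e: "join_metric d1 d2 (2 * x) (2 * y) = squash (d1 x y)" for x y
    by (simp add: join_metric_def)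
  have "squash 0 = 0" by (simp add: squash_def)
  note R = strict_mono_on_squash this e
  show "in_U ((\<lambda>x. 2 * x) ` X) (join_metric d1 d2)" by (rule in_U_rescale[OF X inj R U])
  show "shape (join_metric d1 d2) ((\<lambda>x. 2 * x) ` X) = shape d1 X"
    by (rule shape_rescale[OF X inj R order_refl])
  have "Sp X d1 \<subseteq> {0..}" using ultrametric_nonneg[OF X(1)] unfolding Sp_def by auto
  then show "Sp ((\<lambda>x. 2 * x) ` X) (join_metric d1 d2) \<subseteq> {..<1}"
    unfolding Sp_rescale[OF X inj R] using squash_nonneg_less_1 by auto
qed

lemma join_metric_odds:
  fixes d1 d2 :: "nat \<Rightarrow> nat \<Rightarrow> real"
  assumes U: "in_U X d2"
  shows "in_U ((\<lambda>x. 2 * x + 1) ` X) (join_metric d1 d2)"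
    "shape (join_metric d1 d2) ((\<lambda>x. 2 * x + 1) ` X) = shape d2 X"
    "Sp ((\<lambda>x. 2 * x + 1) ` X) (join_metric d1 d2) \<subseteq> {1<..}"
proof -
  have X: "ultrametric X d2" "finite X" using U unfolding in_U_def by auto
  have inj: "inj_on (\<lambda>x::nat. 2 * x + 1) X" by (simp add: inj_on_def)
  have e: "join_metric d1 d2 (2 * x + 1) (2 * y + 1) = squash_above_1 (d2 x y)" for x y
    by (simp add: join_metric_def)
  have "squash_above_1 0 = 0" by (simp add: squash_above_1_def)
  note R = strict_mono_on_squash_above_1 this e
  show "in_U ((\<lambda>x. 2 * x + 1) ` X) (join_metric d1 d2)" by (rule in_U_rescale[OF X inj R U])
  show "shape (join_metric d1 d2) ((\<lambda>x. 2 * x + 1) ` X) = shape d2 X"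
    by (rule shape_rescale[OF X inj R order_refl])
  have "Sp X d2 \<subseteq> {0<..}" using ultrametric_pos[OF X(1)] unfolding Sp_def by auto
  then show "Sp ((\<lambda>x. 2 * x + 1) ` X) (join_metric d1 d2) \<subseteq> {1<..}"
    unfolding Sp_rescale[OF X inj R] using one_less_squash_above_1 by auto
qed

lemma in_U_join_metric:
  fixes d1 d2 :: "nat \<Rightarrow> nat \<Rightarrow> real"
  assumes U1: "in_U X1 d1" and U2: "in_U X2 d2"
  defines "Y \<equiv> (\<lambda>x. 2 * x) ` X1 \<union> (\<lambda>x. 2 * x + 1) ` X2"
  shows "in_U Y (join_metric d1 d2)" "card Y = card X1 + card X2"
    "shape (join_metric d1 d2) Y = Node {#shape d1 X1, shape d2 X2#}"
proof -
  let ?D = "join_metric d1 d2" and ?Y1 = "(\<lambda>x. 2 * x) ` X1" and ?Y2 = "(\<lambda>x. 2 * x + 1) ` X2"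
  note evens = join_metric_evens[OF U1, of d2] and odds = join_metric_odds[OF U2, of d1]
  have disj: "?Y1 \<inter> ?Y2 = {}" by auto presburger
  have cross: "?D a b = 2 \<and> ?D b a = 2" if "a \<in> ?Y1" "b \<in> ?Y2" for a b
    using that by (auto simp: join_metric_def)
  have um: "ultrametric X1 d1" "ultrametric X2 d2" using U1 U2 unfolding in_U_def by auto
  have "?D (2 * x) (2 * y) < 2" if "x \<in> X1" "y \<in> X1" for x y
    using squash_nonneg_less_1[OF ultrametric_nonneg[OF um(1) that]] by (simp add: join_metric_def)
  moreover have "?D (2 * x + 1) (2 * y + 1) < 2" if "x \<in> X2" "y \<in> X2" for x y
    using squash_above_1_less_2[OF ultrametric_nonneg[OF um(2) that]] by (simp add: join_metric_def)
  ultimately have "?D a b < 2" if "a \<in> ?Y1 \<and> b \<in> ?Y1 \<or> a \<in> ?Y2 \<and> b \<in> ?Y2" for a b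
    using that by blast
  note join = in_U_join[OF evens(1) odds(1) disj cross this] shape_join[OF evens(1) odds(1) disj cross this]
  have "Sp ?Y1 ?D \<inter> Sp ?Y2 ?D = {}" using evens(3) odds(3) by fastforce
  then show "in_U Y ?D" unfolding Y_def using join(1) by blast
  show "shape ?D Y = Node {#shape d1 X1, shape d2 X2#}"
    unfolding Y_def using join(2) evens(2) odds(2) by simp
  show "card Y = card X1 + card X2"
    unfolding Y_def using card_Un_disjoint[OF _ _ disj] U1 U2 unfolding in_U_def
    by (simp add: card_image inj_on_def)
qed

lemma binary_realizable:
  assumes "binary t n"
  shows "\<exists>X (d :: nat \<Rightarrow> nat \<Rightarrow> real). in_U X d \<and> card X = n \<and> shape d X = t"
  using assms
proof (induction rule: binary.induct)
  case leaf
  have um: "ultrametric {0::nat} (\<lambda>_ _. 0)" unfolding ultrametric_def by simp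
  moreover have "Sp {0::nat} (\<lambda>_ _. 0) = {}" unfolding Sp_def by simp
  ultimately have "in_U {0::nat} (\<lambda>_ _. 0)" unfolding in_U_def by simp
  moreover have "shape (\<lambda>_ _. 0) {0::nat} = Node {#}"
    using shape_unfold[OF um] tchildren_small[of "{0::nat}"] by simp
  ultimately show ?case by fastforce
next
  case (node s p t q)
  then obtain X1 X2 and d1 d2 :: "nat \<Rightarrow> nat \<Rightarrow> real"
    where "in_U X1 d1" "card X1 = p" "shape d1 X1 = s" "in_U X2 d2" "card X2 = q" "shape d2 X2 = t"
    by blast
  then show ?case using in_U_join_metric by blast
qed

section \<open>Counting binary trees\<close>

lemma binary_pos: "binary t n \<Longrightarrow> 1 \<le> n"
  by (induction rule: binary.induct) auto

lemma binary_unique: "binary t n \<Longrightarrow> binary t m \<Longrightarrow> n = m"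
proof (induction arbitrary: m rule: binary.induct)
  case leaf
  then show ?case by (cases rule: binary.cases) auto
next
  case (node s p t q)
  from node.prems obtain s' p' t' q' where "{#s, t#} = {#s', t'#}" "m = p' + q'"
    "binary s' p'" "binary t' q'"
    by (cases rule: binary.cases) auto
  then show ?case using node.IH by (auto simp: add_eq_conv_ex)
qed

definition binary_trees :: "nat \<Rightarrow> rtree set" where
  "binary_trees n = {t. binary t n}"

definition binary_pairs :: "nat \<Rightarrow> nat \<Rightarrow> rtree multiset set" where
  "binary_pairs p q = {{#s, t#} | s t. binary s p \<and> binary t q}"

lemma binary_pairs_eq_image:
  "binary_pairs p q = (\<lambda>(s, t). {#s, t#}) ` (binary_trees p \<times> binary_trees q)"
  unfolding binary_pairs_def binary_trees_def by auto

lemma binary_trees_1: "binary_trees 1 = {Node {#}}"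
proof -
  have "t = Node {#}" if "binary t 1" for t
    using that
  proof (cases rule: binary.cases)
    case (node s p t' q)
    then show ?thesis using binary_pos[of s p] binary_pos[of t' q] by simp
  qed simp
  then show ?thesis unfolding binary_trees_def using binary.leaf by blast
qed

lemma binary_trees_eq_Union:
  assumes "2 \<le> n"
  shows "binary_trees n = Node ` (\<Union>p\<in>{1..n div 2}. binary_pairs p (n - p))"
proof (intro equalityI subsetI)
  fix t assume "t \<in> binary_trees n"
  then have "binary t n" unfolding binary_trees_def by simp
  then show "t \<in> Node ` (\<Union>p\<in>{1..n div 2}. binary_pairs p (n - p))"
  proof (cases rule: binary.cases)
    case leaf
    then show ?thesis using assms by simp
  next
    case (node s p t' q)
    have "1 \<le> p" "1 \<le> q" using node(3,4) binary_pos by blast+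
    moreover have "p \<le> n div 2 \<or> q \<le> n div 2" using node(2) by presburger
    ultimately consider "p \<in> {1..n div 2}" | "q \<in> {1..n div 2}" by auto
    then obtain p' where p': "p' \<in> {1..n div 2}" and "{#s, t'#} \<in> binary_pairs p' (n - p')"
    proof cases
      case 1
      moreover have "{#s, t'#} \<in> binary_pairs p (n - p)"
        unfolding binary_pairs_def using node(2-4) by auto
      ultimately show ?thesis using that by blast
    next
      case 2
      moreover have "{#t', s#} \<in> binary_pairs q (n - q)"
        unfolding binary_pairs_def using node(2-4) by auto
      ultimately show ?thesis using that by (simp add: add_mset_commute)
    qed
    then show ?thesis using node(1) by blast
  qed
next
  fix t assume "t \<in> Node ` (\<Union>p\<in>{1..n div 2}. binary_pairs p (n - p))"
  then obtain p s t' where "p \<in> {1..n div 2}" "binary s p" "binary t' (n - p)" "t = Node {#s, t'#}"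
    unfolding binary_pairs_def by blast
  moreover have "p + (n - p) = n" using \<open>p \<in> {1..n div 2}\<close> by auto
  ultimately show "t \<in> binary_trees n" unfolding binary_trees_def using binary.node[of s p t' "n - p"] by simp
qed

lemma finite_binary_trees: "finite (binary_trees n)"
proof (induction n rule: less_induct)
  case (less n)
  consider "n = 0" | "n = 1" | "2 \<le> n" by linarith
  then show ?case
  proof cases
    case 1
    have "\<not> binary t 0" for t using binary_pos[of t 0] by linarith
    then show ?thesis unfolding binary_trees_def using 1 by simp
  next
    case 2
    then show ?thesis using binary_trees_1 by simp
  next
    case 3
    have "finite (binary_pairs p (n - p))" if "p \<in> {1..n div 2}" for p
      unfolding binary_pairs_eq_image using less that by auto
    then show ?thesis using binary_trees_eq_Union[OF 3] by simp
  qed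
qed

lemma card_binary_pairs_eq:
  "card (binary_pairs p p) = card (binary_trees p) * (card (binary_trees p) + 1) div 2"
proof -
  have "binary_pairs p p = multisets_of_size (binary_trees p) 2"
    unfolding binary_pairs_def binary_trees_def multisets_of_size_def
    by (auto simp: size_2_iff) blast
  then have "card (binary_pairs p p) = Suc (card (binary_trees p)) choose 2"
    using card_multisets_of_size[OF finite_binary_trees] by simp
  then show ?thesis by (simp add: choose_two)
qed

lemma card_binary_pairs_neq:
  assumes "p \<noteq> q"
  shows "card (binary_pairs p q) = card (binary_trees p) * card (binary_trees q)"
proof -
  have "inj_on (\<lambda>(s, t). {#s, t#}) (binary_trees p \<times> binary_trees q)"
    using binary_unique assms unfolding binary_trees_def inj_on_def by (auto simp: add_eq_conv_ex)
  then show ?thesis unfolding binary_pairs_eq_image by (simp add: card_image card_cartesian_product)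
qed

lemma card_binary_trees_rec:
  assumes "2 \<le> n"
  shows "card (binary_trees n) = (\<Sum>p\<in>{1..n div 2}. card (binary_pairs p (n - p)))"
proof -
  have "disjoint_family_on (\<lambda>p. binary_pairs p (n - p)) {1..n div 2}"
  proof (unfold disjoint_family_on_def, intro ballI impI)
    fix p p' assume p: "p \<in> {1..n div 2}" "p' \<in> {1..n div 2}" "p \<noteq> p'"
    show "binary_pairs p (n - p) \<inter> binary_pairs p' (n - p') = {}"
    proof (rule ccontr)
      assume "binary_pairs p (n - p) \<inter> binary_pairs p' (n - p') \<noteq> {}"
      then obtain s t s' t' where "binary s p" "binary t (n - p)" "binary s' p'" "binary t' (n - p')"
        "{#s, t#} = {#s', t'#}"
        unfolding binary_pairs_def by blast
      then have "p = p' \<or> p = n - p'" using binary_unique by (auto simp: add_eq_conv_ex)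
      then show False using p by auto
    qed
  qed
  moreover have "finite (binary_pairs p (n - p))" for p
    unfolding binary_pairs_eq_image using finite_binary_trees by simp
  ultimately have "card (\<Union>p\<in>{1..n div 2}. binary_pairs p (n - p))
      = (\<Sum>p\<in>{1..n div 2}. card (binary_pairs p (n - p)))"
    by (intro card_UN_disjoint) (auto simp: disjoint_family_on_def)
  moreover have "inj Node" by (simp add: inj_on_def)
  ultimately show ?thesis
    unfolding binary_trees_eq_Union[OF assms] by (simp add: card_image inj_on_subset)
qed

lemma B_eq_card_binary_trees: "B k = card (binary_trees (Suc k))"
proof -
  define F where "F p = shape (snd p) (fst p)" for p :: "nat set \<times> (nat \<Rightarrow> nat \<Rightarrow> real)"
  have "tree_iso (fst p) (snd p) (fst q) (snd q) \<longleftrightarrow> F p = F q"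
    if "p \<in> U_spaces k" "q \<in> U_spaces k" for p q
  proof -
    have "ultrametric (fst p) (snd p)" "finite (fst p)" "ultrametric (fst q) (snd q)" "finite (fst q)"
      using that unfolding U_spaces_def in_U_def by auto
    then show ?thesis unfolding F_def by (rule tree_iso_iff_shape_eq)
  qed
  then have "B k = card (F ` U_spaces k)"
    unfolding B_def by (rule card_quotient_eq_card_image)
  also have "F ` U_spaces k = binary_trees (Suc k)"
  proof (intro equalityI subsetI)
    fix t assume "t \<in> F ` U_spaces k"
    then show "t \<in> binary_trees (Suc k)"
      using in_U_binary unfolding U_spaces_def F_def binary_trees_def by fastforce
  next
    fix t assume "t \<in> binary_trees (Suc k)"
    then obtain X and d :: "nat \<Rightarrow> nat \<Rightarrow> real" where "in_U X d" "card X = Suc k" "shape d X = t"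
      using binary_realizable unfolding binary_trees_def by blast
    then show "t \<in> F ` U_spaces k" unfolding U_spaces_def F_def by force
  qed
  finally show ?thesis .
qed

lemma B_rec:
  assumes "1 \<le> k"
  shows "B k = (\<Sum>j<k div 2. B (k - j - 1) * B j)
              + (if odd k then B (k div 2) * (B (k div 2) + 1) div 2 else 0)"
proof -
  define c where "c p = card (binary_pairs p (Suc k - p))" for p
  have "B k = (\<Sum>j<Suc k div 2. c (Suc j))"
    using card_binary_trees_rec[of "Suc k"] assms
    by (simp add: B_eq_card_binary_trees c_def sum.atLeast1_atMost_eq)
  moreover have "c (Suc j) = B (k - j - 1) * B j" if "j < k div 2" for j
  proof -
    have "Suc (k - j - 1) = Suc k - Suc j" "Suc j \<noteq> Suc k - Suc j" using that by auto
    then show ?thesis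
      unfolding c_def by (simp add: card_binary_pairs_neq B_eq_card_binary_trees)
  qed
  moreover have "c (Suc (k div 2)) = B (k div 2) * (B (k div 2) + 1) div 2" if "odd k"
  proof -
    have "Suc k - Suc (k div 2) = Suc (k div 2)" using that by presburger
    then show ?thesis unfolding c_def by (simp add: card_binary_pairs_eq B_eq_card_binary_trees)
  qed
  moreover have "Suc k div 2 = (if odd k then Suc (k div 2) else k div 2)" by presburger
  ultimately show ?thesis by (cases "odd k") simp_all
qed

theorem theorem19:
  shows "(\<forall>k\<ge>1. \<forall>i.
            (k = 2*i + 1 \<longrightarrow> B k = B i * (B i + 1) div 2 + (\<Sum>j<i. B (k - j - 1) * B j)) \<and>
            (k = 2*i \<longrightarrow> B k = (\<Sum>j<i. B (k - j - 1) * B j)))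
         \<and> B 1 = 1 \<and> B 2 = 1 \<and> B 3 = 2"
proof -
  have "B 0 = 1" using B_eq_card_binary_trees[of 0] binary_trees_1 by simp
  then have "B 1 = 1" using B_rec[of 1] by simp
  then have "B 2 = 1" using B_rec[of 2] \<open>B 0 = 1\<close> by simp
  then have "B 3 = 2" using B_rec[of 3] \<open>B 0 = 1\<close> \<open>B 1 = 1\<close> by (simp add: lessThan_Suc)
  moreover have "\<forall>k\<ge>1. \<forall>i.
            (k = 2*i + 1 \<longrightarrow> B k = B i * (B i + 1) div 2 + (\<Sum>j<i. B (k - j - 1) * B j)) \<and>
            (k = 2*i \<longrightarrow> B k = (\<Sum>j<i. B (k - j - 1) * B j))"
    using B_rec by auto
  ultimately show ?thesis using \<open>B 1 = 1\<close> \<open>B 2 = 1\<close> by blast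
qed

end
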